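(* Let $G$ be a finite non-abelian group admitting a GRR. Then $G$ admits a $2$-GRR.
   Context: A group $G$ admits a GRR if there is a Cayley graph $\mathrm{Cay}(G,R)$ (vertex set $G$, edges $\{g,rg\}$, $R=R^{-1}$, $1\notin R$) whose automorphism group is isomorphic to $G$. An $m$-GRR for $G$ is a finite regular simple graph admitting a semiregular group of automorphisms isomorphic to $G$ with exactly $m$ orbits on vertices and whose full automorphism group is isomorphic to $G$. *)

theory Defs
  imports "HOL-Algebra.Algebra"
begin

definition simple_graph :: "'v set \<Rightarrow> ('v \<Rightarrow> 'v \<Rightarrow> bool) \<Rightarrow> bool" where
  "simple_graph V E \<longleftrightarrow>
     (\<forall>x y. E x y \<longrightarrow> x \<in> V \<and> y \<in> V) \<and>
     (\<forall>x y. E x y \<longrightarrow> E y x) \<and> (\<forall>x. \<not> E x x)"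

definition regular_graph :: "'v set \<Rightarrow> ('v \<Rightarrow> 'v \<Rightarrow> bool) \<Rightarrow> bool" where
  "regular_graph V E \<longleftrightarrow> (\<exists>k. \<forall>v\<in>V. card {u\<in>V. E v u} = k)"

definition graph_aut_group :: "'v set \<Rightarrow> ('v \<Rightarrow> 'v \<Rightarrow> bool) \<Rightarrow> ('v \<Rightarrow> 'v) monoid" where
  "graph_aut_group V E = BijGroup V \<lparr>carrier :=
     {f \<in> Bij V. \<forall>x\<in>V. \<forall>y\<in>V. E x y \<longleftrightarrow> E (f x) (f y)}\<rparr>"

definition cayley_adj :: "('a, 'b) monoid_scheme \<Rightarrow> 'a set \<Rightarrow> 'a \<Rightarrow> 'a \<Rightarrow> bool" where
  "cayley_adj G R g h \<longleftrightarrow> g \<in> carrier G \<and> h \<in> carrier G \<and> (\<exists>r\<in>R. h = r \<otimes>\<^bsub>G\<^esub> g)"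

definition has_GRR :: "('a, 'b) monoid_scheme \<Rightarrow> bool" where
  "has_GRR G \<longleftrightarrow> (\<exists>R. R \<subseteq> carrier G \<and> (\<forall>r\<in>R. inv\<^bsub>G\<^esub> r \<in> R) \<and> \<one>\<^bsub>G\<^esub> \<notin> R \<and>
       graph_aut_group (carrier G) (cayley_adj G R) \<cong> G)"

text \<open>m-GRR: a finite regular simple graph (vertices drawn from nat, which is
no loss of generality for finite graphs) admitting a semiregular group of
automorphisms isomorphic to G with exactly m orbits, and whose full
automorphism group is isomorphic to G.\<close>

definition has_m_GRR :: "('a, 'b) monoid_scheme \<Rightarrow> nat \<Rightarrow> bool" where
  "has_m_GRR G m \<longleftrightarrow> (\<exists>(V :: nat set) E H.
       finite V \<and> simple_graph V E \<and> regular_graph V E \<and>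
       subgroup H (graph_aut_group V E) \<and>
       (graph_aut_group V E)\<lparr>carrier := H\<rparr> \<cong> G \<and>
       (\<forall>h\<in>H. \<forall>v\<in>V. h v = v \<longrightarrow> h = \<one>\<^bsub>graph_aut_group V E\<^esub>) \<and>
       card ((\<lambda>v. (\<lambda>h. h v) ` H) ` V) = m \<and>
       graph_aut_group V E \<cong> G)"

end

theory Submission
  imports Defs
begin

text \<open>
  Let \<open>Cay(G, R)\<close> be a GRR. Counting shows that its automorphisms are exactly the right
  translations; since \<open>G\<close> is not abelian, some left translation is not an automorphism, which
  yields \<open>c \<in> G\<close> and \<open>x \<in> R\<close> with \<open>c x c\<inverse> \<notin> R\<close>. Take two copies of \<open>Cay(G, R)\<close> and join
  \<open>(g, 0)\<close> to \<open>(s g, 1)\<close> for \<open>s \<in> S = {1, c, c x}\<close>. Right translations of \<open>G\<close> act on this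
  graph semiregularly with the two copies as orbits.

  To see that there are no other automorphisms, let \<open>e(T)\<close> be the number of ordered edges of \<open>Cay(G, R)\<close> inside \<open>T\<close>. The number of
  ordered edges inside the neighbourhood of a vertex is \<open>e(R) + 2 e(S\<inverse>) + e(S)\<close> on copy 0 and
  \<open>e(R) + 2 e(S) + e(S\<inverse>)\<close> on copy 1, and \<open>e(S\<inverse>) = e(S) + 2\<close>. Hence every automorphism
  preserves the copies, acts on each of them as a right translation, by \<open>y\<^sub>0\<close> and \<open>y\<^sub>1\<close> say,
  and the edges between the copies give \<open>S y\<^sub>1 y\<^sub>0\<inverse> \<subseteq> S\<close>, which for this \<open>S\<close> forces \<open>y\<^sub>0 = y\<^sub>1\<close>.
\<close>

section \<open>Graph isomorphisms and automorphism groups\<close>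

definition graph_iso :: "'v set \<Rightarrow> ('v \<Rightarrow> 'v \<Rightarrow> bool) \<Rightarrow> 'w set \<Rightarrow> ('w \<Rightarrow> 'w \<Rightarrow> bool) \<Rightarrow> ('v \<Rightarrow> 'w) \<Rightarrow> bool"
  where "graph_iso V E W F f \<longleftrightarrow> bij_betw f V W \<and> (\<forall>x\<in>V. \<forall>y\<in>V. E x y \<longleftrightarrow> F (f x) (f y))"

definition neighbours :: "'v set \<Rightarrow> ('v \<Rightarrow> 'v \<Rightarrow> bool) \<Rightarrow> 'v \<Rightarrow> 'v set"
  where "neighbours V E v = {u \<in> V. E v u}"

lemma graph_iso_inv_into:
  assumes "graph_iso V E W F f"
  shows "graph_iso W F V E (inv_into V f)"
proof -
  have bij: "bij_betw f V W" and edges: "\<forall>x\<in>V. \<forall>y\<in>V. E x y \<longleftrightarrow> F (f x) (f y)"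
    using assms by (auto simp: graph_iso_def)
  have "E (inv_into V f x) (inv_into V f y) \<longleftrightarrow> F x y" if "x \<in> W" "y \<in> W" for x y
  proof -
    have "inv_into V f x \<in> V" "inv_into V f y \<in> V"
      using that bij_betwE[OF bij_betw_inv_into[OF bij]] by auto
    moreover have "f (inv_into V f x) = x" "f (inv_into V f y) = y"
      using that bij bij_betw_inv_into_right by fastforce+
    ultimately show ?thesis using edges by metis
  qed
  then show ?thesis
    using bij_betw_inv_into[OF bij] by (simp add: graph_iso_def)
qed

lemma graph_iso_comp:
  assumes "graph_iso V E W F f" and "graph_iso W F U K g"
  shows "graph_iso V E U K (g \<circ> f)"
proof -
  have "bij_betw (g \<circ> f) V U" using assms bij_betw_trans by (auto simp: graph_iso_def)
  moreover have "f x \<in> W" if "x \<in> V" for x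
    using assms that bij_betwE by (auto simp: graph_iso_def)
  ultimately show ?thesis using assms by (simp add: graph_iso_def)
qed

lemma graph_iso_cong:
  assumes "graph_iso V E W F f" and "\<And>x. x \<in> V \<Longrightarrow> f x = g x"
  shows "graph_iso V E W F g"
  using assms bij_betw_cong[of V f g W] by (simp add: graph_iso_def)

lemma graph_iso_id: "graph_iso V E V E id"
  by (simp add: graph_iso_def)

lemma neighbours_graph_iso:
  assumes "graph_iso V E W F f" and "v \<in> V"
  shows "neighbours W F (f v) = f ` neighbours V E v"
  using assms bij_betwE[of f V W] bij_betw_imp_surj_on[of f V W]
  by (auto simp: graph_iso_def neighbours_def)

definition nbhd_edge_count :: "'v set \<Rightarrow> ('v \<Rightarrow> 'v \<Rightarrow> bool) \<Rightarrow> 'v \<Rightarrow> nat"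
  where "nbhd_edge_count V E v =
    (\<Sum>u\<in>neighbours V E v. \<Sum>w\<in>neighbours V E v. of_bool (E u w))"

lemma nbhd_edge_count_graph_iso:
  assumes iso: "graph_iso V E W F f" and "v \<in> V"
  shows "nbhd_edge_count W F (f v) = nbhd_edge_count V E v"
proof -
  have inj: "inj_on f (neighbours V E v)"
    using iso by (auto simp: graph_iso_def bij_betw_def neighbours_def intro: inj_on_subset)
  have edges: "F (f u) (f w) \<longleftrightarrow> E u w" if "u \<in> neighbours V E v" "w \<in> neighbours V E v" for u w
    using iso that by (simp add: graph_iso_def neighbours_def)
  show ?thesis
    unfolding nbhd_edge_count_def neighbours_graph_iso[OF assms]
    by (simp add: sum.reindex[OF inj] edges cong: sum.cong)
qed

lemma graph_aut_group_carrier: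
  "h \<in> carrier (graph_aut_group V E) \<longleftrightarrow> h \<in> extensional V \<and> graph_iso V E V E h"
  by (auto simp: graph_aut_group_def graph_iso_def Bij_def)

lemma graph_aut_group_mult:
  "f \<in> carrier (graph_aut_group V E) \<Longrightarrow> g \<in> carrier (graph_aut_group V E) \<Longrightarrow>
    f \<otimes>\<^bsub>graph_aut_group V E\<^esub> g = compose V f g"
  by (simp add: graph_aut_group_def BijGroup_def)

lemma graph_aut_group_one: "\<one>\<^bsub>graph_aut_group V E\<^esub> = (\<lambda>x\<in>V. x)"
  by (simp add: graph_aut_group_def BijGroup_def)

lemma subgroup_graph_aut_group: "subgroup (carrier (graph_aut_group V E)) (BijGroup V)"
proof (rule group.subgroupI[OF group_BijGroup])
  show "carrier (graph_aut_group V E) \<subseteq> carrier (BijGroup V)"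
    by (auto simp: graph_aut_group_def BijGroup_def)
  have "graph_iso V E V E (\<lambda>x\<in>V. x)"
    by (rule graph_iso_cong[OF graph_iso_id]) simp
  then have "(\<lambda>x\<in>V. x) \<in> carrier (graph_aut_group V E)"
    by (simp add: graph_aut_group_carrier)
  then show "carrier (graph_aut_group V E) \<noteq> {}" by blast
next
  fix f assume f: "f \<in> carrier (graph_aut_group V E)"
  then have "graph_iso V E V E (inv_into V f)"
    by (simp add: graph_aut_group_carrier graph_iso_inv_into)
  then have "graph_iso V E V E (\<lambda>x\<in>V. inv_into V f x)"
    by (rule graph_iso_cong) simp
  moreover have "f \<in> Bij V" using f by (simp add: graph_aut_group_def)
  ultimately show "inv\<^bsub>BijGroup V\<^esub> f \<in> carrier (graph_aut_group V E)"
    by (simp add: inv_BijGroup graph_aut_group_carrier)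
next
  fix f g assume f: "f \<in> carrier (graph_aut_group V E)" and g: "g \<in> carrier (graph_aut_group V E)"
  then have "graph_iso V E V E (f \<circ> g)"
    by (meson graph_aut_group_carrier graph_iso_comp)
  then have "graph_iso V E V E (compose V f g)"
    by (rule graph_iso_cong) (simp add: compose_def)
  moreover have "f \<in> Bij V" "g \<in> Bij V"
    using f g by (simp_all add: graph_aut_group_def)
  moreover have "compose V f g \<in> extensional V"
    by (simp add: compose_def)
  ultimately show "f \<otimes>\<^bsub>BijGroup V\<^esub> g \<in> carrier (graph_aut_group V E)"
    by (simp add: graph_aut_group_carrier BijGroup_def)
qed

lemma group_graph_aut_group: "group (graph_aut_group V E)"
  using subgroup.subgroup_is_group[OF subgroup_graph_aut_group group_BijGroup]
  by (simp add: graph_aut_group_def)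

section \<open>Relabelling the vertices of a graph\<close>

definition aut_semiregular :: "'v set \<Rightarrow> ('v \<Rightarrow> 'v \<Rightarrow> bool) \<Rightarrow> bool"
  where "aut_semiregular V E \<longleftrightarrow>
    (\<forall>h\<in>carrier (graph_aut_group V E). \<forall>v\<in>V. h v = v \<longrightarrow> h = \<one>\<^bsub>graph_aut_group V E\<^esub>)"

definition aut_orbits :: "'v set \<Rightarrow> ('v \<Rightarrow> 'v \<Rightarrow> bool) \<Rightarrow> 'v set set"
  where "aut_orbits V E = (\<lambda>v. (\<lambda>h. h v) ` carrier (graph_aut_group V E)) ` V"

definition conj_perm :: "('v \<Rightarrow> 'w) \<Rightarrow> 'v set \<Rightarrow> 'w set \<Rightarrow> ('v \<Rightarrow> 'v) \<Rightarrow> 'w \<Rightarrow> 'w"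
  where "conj_perm f V W h = (\<lambda>w\<in>W. f (h (inv_into V f w)))"

lemma graph_aut_apply_mem:
  "h \<in> carrier (graph_aut_group V E) \<Longrightarrow> v \<in> V \<Longrightarrow> h v \<in> V"
  using bij_betwE by (fastforce simp: graph_aut_group_carrier graph_iso_def)

lemma conj_perm_apply:
  assumes "graph_iso V E W F f" and "v \<in> V"
  shows "conj_perm f V W h (f v) = f (h v)"
proof -
  have "bij_betw f V W" using assms by (simp add: graph_iso_def)
  then show ?thesis
    using assms by (simp add: conj_perm_def bij_betwE bij_betw_inv_into_left)
qed

lemma conj_perm_graph_aut:
  assumes "graph_iso V E W F f" and "h \<in> carrier (graph_aut_group V E)"
  shows "conj_perm f V W h \<in> carrier (graph_aut_group W F)"
proof -
  have "graph_iso W F W F (f \<circ> h \<circ> inv_into V f)"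
    using assms graph_iso_inv_into graph_iso_comp by (metis graph_aut_group_carrier)
  then have "graph_iso W F W F (conj_perm f V W h)"
    by (rule graph_iso_cong) (simp add: conj_perm_def)
  then show ?thesis
    by (simp add: graph_aut_group_carrier conj_perm_def)
qed

lemma conj_perm_hom:
  assumes iso: "graph_iso V E W F f"
  shows "conj_perm f V W \<in> hom (graph_aut_group V E) (graph_aut_group W F)"
proof (rule homI)
  let ?A = "graph_aut_group V E" and ?B = "graph_aut_group W F" and ?c = "conj_perm f V W"
  have bij: "bij_betw f V W" using iso by (simp add: graph_iso_def)
  fix h k assume h: "h \<in> carrier ?A" and k: "k \<in> carrier ?A"
  have "?c (compose V h k) = compose W (?c h) (?c k)"
  proof (rule extensionalityI)
    fix w assume "w \<in> W"
    then obtain v where v: "v \<in> V" "w = f v"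
      using bij bij_betw_imp_surj_on by blast
    have "f v \<in> W" "f (k v) \<in> W"
      using v(1) graph_aut_apply_mem[OF k v(1)] bij bij_betwE by blast+
    then show "?c (compose V h k) w = compose W (?c h) (?c k) w"
      using iso v graph_aut_apply_mem[OF k] by (simp add: compose_def conj_perm_apply)
  qed (simp_all add: conj_perm_def compose_def)
  then show "?c (h \<otimes>\<^bsub>?A\<^esub> k) = ?c h \<otimes>\<^bsub>?B\<^esub> ?c k"
    using h k conj_perm_graph_aut[OF iso h] conj_perm_graph_aut[OF iso k]
    by (simp add: graph_aut_group_mult)
qed (rule conj_perm_graph_aut[OF iso])

lemma inj_on_conj_perm:
  assumes iso: "graph_iso V E W F f"
  shows "inj_on (conj_perm f V W) (carrier (graph_aut_group V E))"
proof (rule inj_onI)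
  fix h k assume h: "h \<in> carrier (graph_aut_group V E)" and k: "k \<in> carrier (graph_aut_group V E)"
    and eq: "conj_perm f V W h = conj_perm f V W k"
  show "h = k"
  proof (rule extensionalityI)
    fix v assume v: "v \<in> V"
    then have "f (h v) = f (k v)"
      using eq iso conj_perm_apply by metis
    then show "h v = k v"
      using v graph_aut_apply_mem[OF h] graph_aut_apply_mem[OF k] iso
      by (auto simp: graph_iso_def bij_betw_def inj_on_def)
  qed (use h k in \<open>simp_all add: graph_aut_group_carrier\<close>)
qed

lemma graph_aut_group_conj_perm_image:
  assumes iso: "graph_iso V E W F f"
  shows "carrier (graph_aut_group W F) = conj_perm f V W ` carrier (graph_aut_group V E)"
proof
  show "conj_perm f V W ` carrier (graph_aut_group V E) \<subseteq> carrier (graph_aut_group W F)"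
    using conj_perm_graph_aut[OF iso] by blast
  show "carrier (graph_aut_group W F) \<subseteq> conj_perm f V W ` carrier (graph_aut_group V E)"
  proof
    fix k assume k: "k \<in> carrier (graph_aut_group W F)"
    let ?h = "conj_perm (inv_into V f) W V k"
    have h: "?h \<in> carrier (graph_aut_group V E)"
      using conj_perm_graph_aut[OF graph_iso_inv_into[OF iso] k] .
    have "conj_perm f V W ?h = k"
    proof (rule extensionalityI)
      fix w assume w: "w \<in> W"
      have "conj_perm f V W ?h w = f (inv_into V f (k w))"
        using w conj_perm_apply[OF graph_iso_inv_into[OF iso] w] by (simp add: conj_perm_def)
      also have "\<dots> = k w"
        using graph_aut_apply_mem[OF k w] iso bij_betw_inv_into_right
        by (metis graph_iso_def)
      finally show "conj_perm f V W ?h w = k w" .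
    qed (use k in \<open>simp_all add: graph_aut_group_carrier conj_perm_def\<close>)
    then show "k \<in> conj_perm f V W ` carrier (graph_aut_group V E)"
      using h by (metis image_eqI)
  qed
qed

lemma conj_perm_iso:
  assumes "graph_iso V E W F f"
  shows "conj_perm f V W \<in> iso (graph_aut_group V E) (graph_aut_group W F)"
  using conj_perm_hom[OF assms] inj_on_conj_perm[OF assms] graph_aut_group_conj_perm_image[OF assms]
  by (simp add: iso_def bij_betw_def)

lemma regular_graph_iso:
  assumes iso: "graph_iso V E W F f" and "regular_graph V E"
  shows "regular_graph W F"
proof -
  obtain d where d: "\<forall>v\<in>V. card (neighbours V E v) = d"
    using assms by (auto simp: regular_graph_def neighbours_def)
  have bij: "bij_betw f V W" using iso by (simp add: graph_iso_def)
  have "card (neighbours W F w) = d" if "w \<in> W" for w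
  proof -
    have "w \<in> f ` V" using that bij_betw_imp_surj_on[OF bij] by simp
    then obtain v where v: "v \<in> V" "w = f v" by blast
    have "inj_on f (neighbours V E v)"
      using bij by (rule inj_on_subset[OF bij_betw_imp_inj_on]) (auto simp: neighbours_def)
    then show ?thesis
      using v d neighbours_graph_iso[OF iso v(1)] by (simp add: card_image)
  qed
  then show ?thesis by (auto simp: regular_graph_def neighbours_def)
qed

lemma simple_graph_iso:
  assumes iso: "graph_iso V E W F f" and F_W: "\<And>x y. F x y \<Longrightarrow> x \<in> W \<and> y \<in> W"
    and "simple_graph V E"
  shows "simple_graph W F"
proof -
  have bij: "bij_betw f V W" and E_F: "\<forall>x\<in>V. \<forall>y\<in>V. E x y \<longleftrightarrow> F (f x) (f y)"
    using iso by (auto simp: graph_iso_def)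
  have "F y x \<and> \<not> F x x" if "F x y" for x y
  proof -
    have "x \<in> f ` V" "y \<in> f ` V"
      using F_W[OF \<open>F x y\<close>] bij_betw_imp_surj_on[OF bij] by auto
    then obtain x' y' where "x' \<in> V" "y' \<in> V" "x = f x'" "y = f y'"
      by blast
    then show ?thesis
      using \<open>F x y\<close> E_F \<open>simple_graph V E\<close> unfolding simple_graph_def by metis
  qed
  then show ?thesis using F_W by (auto simp: simple_graph_def)
qed

lemma aut_semiregular_iso:
  assumes iso: "graph_iso V E W F f" and semireg: "aut_semiregular V E"
  shows "aut_semiregular W F"
  unfolding aut_semiregular_def
proof (intro ballI impI)
  let ?A = "graph_aut_group V E" and ?B = "graph_aut_group W F"
  fix k w assume k: "k \<in> carrier ?B" and w: "w \<in> W" and fixed: "k w = w"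
  obtain h where h: "h \<in> carrier ?A" "k = conj_perm f V W h"
    using k graph_aut_group_conj_perm_image[OF iso] by blast
  have bij: "bij_betw f V W" using iso by (simp add: graph_iso_def)
  obtain v where v: "v \<in> V" "w = f v"
    using w bij_betw_imp_surj_on[OF bij] by blast
  have "f (h v) = f v"
    using fixed h(2) v conj_perm_apply[OF iso v(1), of h] by simp
  then have "h v = v"
    using v(1) graph_aut_apply_mem[OF h(1) v(1)] bij_betw_imp_inj_on[OF bij]
    by (simp add: inj_on_eq_iff)
  then have "h = \<one>\<^bsub>?A\<^esub>"
    using semireg h(1) v(1) by (auto simp: aut_semiregular_def)
  moreover have "conj_perm f V W \<in> hom ?A ?B"
    using conj_perm_iso[OF iso] by (simp add: iso_def)
  ultimately show "k = \<one>\<^bsub>?B\<^esub>"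
    using h(2) hom_one[OF _ group_graph_aut_group group_graph_aut_group] by simp
qed

lemma card_aut_orbits_iso:
  assumes iso: "graph_iso V E W F f"
  shows "card (aut_orbits W F) = card (aut_orbits V E)"
proof -
  let ?A = "graph_aut_group V E" and ?B = "graph_aut_group W F"
  have bij: "bij_betw f V W" using iso by (simp add: graph_iso_def)
  have orbit: "(\<lambda>k. k (f v)) ` carrier ?B = f ` (\<lambda>h. h v) ` carrier ?A" if "v \<in> V" for v
    using that conj_perm_apply[OF iso] by (simp add: graph_aut_group_conj_perm_image[OF iso] image_image)
  have "aut_orbits W F = (\<lambda>w. (\<lambda>k. k w) ` carrier ?B) ` f ` V"
    by (simp add: aut_orbits_def bij_betw_imp_surj_on[OF bij])
  also have "\<dots> = (\<lambda>v. (\<lambda>k. k (f v)) ` carrier ?B) ` V"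
    by (simp add: image_image)
  also have "\<dots> = image f ` aut_orbits V E"
    using orbit by (simp add: aut_orbits_def image_image cong: image_cong)
  finally have "aut_orbits W F = image f ` aut_orbits V E" .
  moreover have "aut_orbits V E \<subseteq> Pow V"
    using graph_aut_apply_mem by (auto simp: aut_orbits_def)
  then have "inj_on (image f) (aut_orbits V E)"
    by (rule inj_on_subset[OF inj_on_image_Pow[OF bij_betw_imp_inj_on[OF bij]]])
  ultimately show ?thesis by (simp add: card_image)
qed

lemma has_m_GRR_if_graph:
  fixes V :: "'v set" and E :: "'v \<Rightarrow> 'v \<Rightarrow> bool"
  assumes "finite V" and "simple_graph V E" and "regular_graph V E"
    and "aut_semiregular V E" and "card (aut_orbits V E) = m"
    and "graph_aut_group V E \<cong> G"
  shows "has_m_GRR G m"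
proof -
  obtain f :: "'v \<Rightarrow> nat" where "inj_on f V"
    using finite_imp_inj_to_nat_seg[OF \<open>finite V\<close>] by blast
  define W where "W = f ` V"
  define F where "F x y \<longleftrightarrow> x \<in> W \<and> y \<in> W \<and> E (inv_into V f x) (inv_into V f y)" for x y
  have iso: "graph_iso V E W F f"
    using \<open>inj_on f V\<close> by (simp add: graph_iso_def W_def F_def inj_on_imp_bij_betw)
  let ?B = "graph_aut_group W F"
  have "?B \<cong> graph_aut_group V E"
    using group.iso_sym[OF group_graph_aut_group is_isoI[OF conj_perm_iso[OF iso]]] .
  then have "?B \<cong> G"
    using \<open>graph_aut_group V E \<cong> G\<close> by (rule iso_trans)
  moreover have "finite W"
    using \<open>finite V\<close> by (simp add: W_def)
  moreover have "simple_graph W F"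
    using simple_graph_iso[OF iso] \<open>simple_graph V E\<close> by (simp add: F_def)
  moreover have "subgroup (carrier ?B) ?B"
    by (simp add: group.subgroup_self group_graph_aut_group)
  ultimately show ?thesis
    using assms regular_graph_iso[OF iso] aut_semiregular_iso[OF iso] card_aut_orbits_iso[OF iso]
    unfolding has_m_GRR_def aut_semiregular_def aut_orbits_def
    by (intro exI[of _ W] exI[of _ F] exI[of _ "carrier ?B"]) simp
qed

section \<open>Cayley graphs\<close>

definition right_translation :: "('a, 'b) monoid_scheme \<Rightarrow> 'a \<Rightarrow> 'a \<Rightarrow> 'a"
  where "right_translation G y = (\<lambda>g\<in>carrier G. g \<otimes>\<^bsub>G\<^esub> y)"

definition cayley_edge_count :: "('a, 'b) monoid_scheme \<Rightarrow> 'a set \<Rightarrow> 'a set \<Rightarrow> 'a set \<Rightarrow> nat"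
  where "cayley_edge_count G C A B = (\<Sum>a\<in>A. \<Sum>b\<in>B. of_bool (cayley_adj G C a b))"

context group
begin

lemma cayley_adj_iff:
  assumes "C \<subseteq> carrier G"
  shows "cayley_adj G C a b \<longleftrightarrow> a \<in> carrier G \<and> b \<in> carrier G \<and> b \<otimes> inv a \<in> C"
proof -
  have "b \<otimes> inv a = c \<longleftrightarrow> b = c \<otimes> a" if "a \<in> carrier G" "b \<in> carrier G" "c \<in> C" for a b c
    using that assms inv_solve_right' by blast
  then show ?thesis
    unfolding cayley_adj_def by (metis inv_closed m_closed)
qed

lemma cayley_adj_mult_right:
  assumes "C \<subseteq> carrier G" and "a \<in> carrier G" "b \<in> carrier G" "g \<in> carrier G"
  shows "cayley_adj G C (a \<otimes> g) (b \<otimes> g) \<longleftrightarrow> cayley_adj G C a b"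
proof -
  have "b \<otimes> g \<otimes> inv (a \<otimes> g) = b \<otimes> inv a"
    using assms by (simp add: inv_mult_group m_assoc flip: m_assoc[of g])
  then show ?thesis
    using assms by (simp add: cayley_adj_iff)
qed

lemma cayley_adj_inv_image:
  assumes "C \<subseteq> carrier G"
  shows "cayley_adj G (m_inv G ` C) b a \<longleftrightarrow> cayley_adj G C a b"
proof -
  have "m_inv G ` C \<subseteq> carrier G" using assms by auto
  moreover have "a \<otimes> inv b \<in> m_inv G ` C \<longleftrightarrow> b \<otimes> inv a \<in> C" if "a \<in> carrier G" "b \<in> carrier G"
  proof -
    have "a \<otimes> inv b = inv (b \<otimes> inv a)"
      using that by (simp add: inv_mult_group)
    then show ?thesis
      using that assms inv_inj by (auto simp: inj_on_image_mem_iff)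
  qed
  ultimately show ?thesis
    using assms by (auto simp: cayley_adj_iff)
qed

lemma cayley_edge_count_inv_image:
  assumes "C \<subseteq> carrier G"
  shows "cayley_edge_count G (m_inv G ` C) B A = cayley_edge_count G C A B"
  unfolding cayley_edge_count_def cayley_adj_inv_image[OF assms]
  by (rule sum.swap)

lemma cayley_edge_count_eq_card:
  assumes "finite A" "finite B" "A \<subseteq> carrier G" "B \<subseteq> carrier G" "C \<subseteq> carrier G"
  shows "cayley_edge_count G C A B = card {(a, b) \<in> A \<times> B. b \<otimes> inv a \<in> C}"
proof -
  have "cayley_edge_count G C A B = (\<Sum>p\<in>A \<times> B. of_bool (snd p \<otimes> inv (fst p) \<in> C))"
    using assms unfolding cayley_edge_count_def sum.cartesian_product
    by (intro sum.cong) (auto simp: cayley_adj_iff)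
  also have "\<dots> = card {p \<in> A \<times> B. snd p \<otimes> inv (fst p) \<in> C}"
    using assms by (simp add: Int_def)
  also have "{p \<in> A \<times> B. snd p \<otimes> inv (fst p) \<in> C} = {(a, b) \<in> A \<times> B. b \<otimes> inv a \<in> C}"
    by auto
  finally show ?thesis .
qed

lemma bij_betw_quotient_pairs:
  assumes "A \<subseteq> carrier G" "B \<subseteq> carrier G" "C \<subseteq> carrier G"
  shows "bij_betw (\<lambda>(a, b). (b \<otimes> inv a, inv a))
    {(a, b) \<in> A \<times> B. b \<otimes> inv a \<in> C} {(c, a') \<in> C \<times> m_inv G ` A. a' \<otimes> inv c \<in> m_inv G ` B}"
    (is "bij_betw ?f ?P ?Q")
proof (rule bij_betw_byWitness[where f' = "\<lambda>(c, a'). (inv a', c \<otimes> inv a')"])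
  show "\<forall>p\<in>?P. (\<lambda>(c, a'). (inv a', c \<otimes> inv a')) (?f p) = p"
    using assms by (auto simp: m_assoc subset_eq)
  show "\<forall>q\<in>?Q. ?f ((\<lambda>(c, a'). (inv a', c \<otimes> inv a')) q) = q"
    using assms by (auto simp: m_assoc subset_eq)
  show "?f ` ?P \<subseteq> ?Q"
  proof (rule image_subsetI)
    fix p assume "p \<in> ?P"
    then obtain a b where p: "p = (a, b)" "a \<in> A" "b \<in> B" "b \<otimes> inv a \<in> C"
      by blast
    moreover have "inv a \<otimes> inv (b \<otimes> inv a) = inv b"
      using p assms(1,2) by (simp add: subsetD inv_mult_group m_assoc flip: m_assoc[of "inv a"])
    ultimately show "?f p \<in> ?Q"
      by auto
  qed
  show "(\<lambda>(c, a'). (inv a', c \<otimes> inv a')) ` ?Q \<subseteq> ?P"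
  proof (rule image_subsetI)
    fix q assume "q \<in> ?Q"
    then obtain c a where q: "q = (c, inv a)" "c \<in> C" "a \<in> A" "inv a \<otimes> inv c \<in> m_inv G ` B"
      by blast
    have a: "a \<in> carrier G" and c: "c \<in> carrier G"
      using q assms(1,3) by auto
    have "inv (c \<otimes> a) \<in> m_inv G ` B"
      using q(4) a c by (simp add: inv_mult_group)
    then have "c \<otimes> a \<in> B"
      using a c assms(2) inv_inj by (simp add: inj_on_image_mem_iff)
    then show "(\<lambda>(c, a'). (inv a', c \<otimes> inv a')) q \<in> ?P"
      using q a c by (simp add: m_assoc)
  qed
qed

text \<open>Both counts enumerate the solutions of \<open>b = c a\<close> with \<open>a \<in> A\<close>, \<open>b \<in> B\<close>, \<open>c \<in> C\<close>.\<close>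

lemma cayley_edge_count_rotate:
  assumes "finite A" "finite B" "finite C" and "A \<subseteq> carrier G" "B \<subseteq> carrier G" "C \<subseteq> carrier G"
  shows "cayley_edge_count G C A B = cayley_edge_count G (m_inv G ` B) C (m_inv G ` A)"
proof -
  have "cayley_edge_count G C A B = card {(a, b) \<in> A \<times> B. b \<otimes> inv a \<in> C}"
    using assms by (intro cayley_edge_count_eq_card)
  also have "\<dots> = card {(c, a') \<in> C \<times> m_inv G ` A. a' \<otimes> inv c \<in> m_inv G ` B}"
    using bij_betw_quotient_pairs[OF assms(4-6)] by (rule bij_betw_same_card)
  also have "\<dots> = cayley_edge_count G (m_inv G ` B) C (m_inv G ` A)"
    using assms by (intro cayley_edge_count_eq_card[symmetric]) auto
  finally show ?thesis .
qed

lemma right_translation_graph_aut: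
  assumes "C \<subseteq> carrier G" and "y \<in> carrier G"
  shows "right_translation G y \<in> carrier (graph_aut_group (carrier G) (cayley_adj G C))"
proof -
  have "bij_betw (right_translation G y) (carrier G) (carrier G)"
    by (rule bij_betw_byWitness[where f' = "\<lambda>g. g \<otimes> inv y"])
      (use assms in \<open>auto simp: right_translation_def m_assoc\<close>)
  then show ?thesis
    using assms by (auto simp: graph_aut_group_carrier graph_iso_def right_translation_def
      cayley_adj_mult_right)
qed

lemma inj_on_right_translation: "inj_on (right_translation G) (carrier G)"
proof (rule inj_onI)
  fix x y assume "x \<in> carrier G" "y \<in> carrier G" "right_translation G x = right_translation G y"
  then have "right_translation G x \<one> = right_translation G y \<one>" by simp
  then show "x = y"
    using \<open>x \<in> carrier G\<close> \<open>y \<in> carrier G\<close> by (simp add: right_translation_def)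
qed

lemma graph_aut_cayley_eq_right_translations:
  assumes "finite (carrier G)" and "C \<subseteq> carrier G"
    and "graph_aut_group (carrier G) (cayley_adj G C) \<cong> G"
  shows "carrier (graph_aut_group (carrier G) (cayley_adj G C)) = right_translation G ` carrier G"
proof -
  let ?A = "carrier (graph_aut_group (carrier G) (cayley_adj G C))"
  have sub: "right_translation G ` carrier G \<subseteq> ?A"
    using right_translation_graph_aut[OF assms(2)] by blast
  have "card (right_translation G ` carrier G) = card ?A"
    using inj_on_right_translation iso_same_card[OF assms(3)] by (simp add: card_image)
  moreover have "finite ?A"
    using iso_finite[OF assms(3)] assms(1) by simp
  ultimately show ?thesis
    using card_subset_eq[OF _ sub] by simp
qed

lemma left_translation_graph_aut:
  assumes "C \<subseteq> carrier G" and "c \<in> carrier G"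
    and conj_closed: "\<And>g x. g \<in> carrier G \<Longrightarrow> x \<in> C \<Longrightarrow> g \<otimes> x \<otimes> inv g \<in> C"
  shows "(\<lambda>g\<in>carrier G. c \<otimes> g) \<in> carrier (graph_aut_group (carrier G) (cayley_adj G C))"
proof -
  have conj_iff: "c \<otimes> x \<otimes> inv c \<in> C \<longleftrightarrow> x \<in> C" if "x \<in> carrier G" for x
  proof
    assume "c \<otimes> x \<otimes> inv c \<in> C"
    then have "inv c \<otimes> (c \<otimes> x \<otimes> inv c) \<otimes> inv (inv c) \<in> C"
      using conj_closed assms(2) by blast
    moreover have "inv c \<otimes> (c \<otimes> x \<otimes> inv c) \<otimes> inv (inv c) = x"
      using that assms(2) by (simp add: m_assoc[symmetric]) (simp add: m_assoc)
    ultimately show "x \<in> C" by simp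
  qed (use conj_closed assms(2) in blast)
  have "bij_betw (\<lambda>g\<in>carrier G. c \<otimes> g) (carrier G) (carrier G)"
    by (rule bij_betw_byWitness[where f' = "\<lambda>g. inv c \<otimes> g"])
      (use assms(2) in \<open>auto simp: m_assoc[symmetric]\<close>)
  moreover have "cayley_adj G C (c \<otimes> a) (c \<otimes> b) \<longleftrightarrow> cayley_adj G C a b"
    if "a \<in> carrier G" "b \<in> carrier G" for a b
  proof -
    have "c \<otimes> b \<otimes> inv (c \<otimes> a) = c \<otimes> (b \<otimes> inv a) \<otimes> inv c"
      using that assms(2) by (simp add: inv_mult_group m_assoc)
    then show ?thesis
      using that assms(1,2) conj_iff by (simp add: cayley_adj_iff)
  qed
  ultimately show ?thesis
    by (simp add: graph_aut_group_carrier graph_iso_def)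
qed

lemma ex_conjugate_notin_if_not_comm:
  assumes "C \<subseteq> carrier G" and "\<not> comm_group G"
    and aut: "carrier (graph_aut_group (carrier G) (cayley_adj G C)) = right_translation G ` carrier G"
  shows "\<exists>c\<in>carrier G. \<exists>x\<in>C. c \<otimes> x \<otimes> inv c \<notin> C"
proof (rule ccontr)
  assume "\<not> ?thesis"
  then have conj_closed: "\<And>g x. g \<in> carrier G \<Longrightarrow> x \<in> C \<Longrightarrow> g \<otimes> x \<otimes> inv g \<in> C"
    by blast
  have "c \<otimes> g = g \<otimes> c" if "c \<in> carrier G" "g \<in> carrier G" for c g
  proof -
    obtain y where y: "y \<in> carrier G" "(\<lambda>g\<in>carrier G. c \<otimes> g) = right_translation G y"
      using left_translation_graph_aut[OF assms(1) \<open>c \<in> carrier G\<close> conj_closed] aut by auto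
    have "c = y"
      using fun_cong[OF y(2), of \<one>] y(1) that by (simp add: right_translation_def)
    then show ?thesis
      using fun_cong[OF y(2), of g] that by (simp add: right_translation_def)
  qed
  then have "comm_group G"
    by (intro group_comm_groupI) auto
  with assms(2) show False ..
qed

end

section \<open>Bi-Cayley graphs\<close>

text \<open>Two copies \<open>False\<close> and \<open>True\<close> of \<open>Cay(G, R)\<close>, with \<open>(g, False)\<close> joined to \<open>(s g, True)\<close>
  for \<open>s \<in> S\<close>; seen from copy \<open>True\<close>, these edges have connection set \<open>S\<inverse>\<close>.\<close>

definition bicayley_conn :: "('a, 'b) monoid_scheme \<Rightarrow> 'a set \<Rightarrow> 'a set \<Rightarrow> bool \<Rightarrow> bool \<Rightarrow> 'a set"
  where "bicayley_conn G R S i j = (if i = j then R else if j then S else m_inv G ` S)"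

definition bicayley_adj :: "('a, 'b) monoid_scheme \<Rightarrow> 'a set \<Rightarrow> 'a set \<Rightarrow> 'a \<times> bool \<Rightarrow> 'a \<times> bool \<Rightarrow> bool"
  where "bicayley_adj G R S u v \<longleftrightarrow> cayley_adj G (bicayley_conn G R S (snd u) (snd v)) (fst u) (fst v)"

definition bicayley_shift :: "('a, 'b) monoid_scheme \<Rightarrow> 'a \<Rightarrow> 'a \<times> bool \<Rightarrow> 'a \<times> bool"
  where "bicayley_shift G y = (\<lambda>v\<in>carrier G \<times> UNIV. (fst v \<otimes>\<^bsub>G\<^esub> y, snd v))"

locale bicayley = group G for G (structure) +
  fixes R S :: "'a set"
  assumes finite_carrier: "finite (carrier G)"
    and R_subset: "R \<subseteq> carrier G" and R_inv: "\<And>r. r \<in> R \<Longrightarrow> inv r \<in> R" and one_notin_R: "\<one> \<notin> R"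
    and S_subset: "S \<subseteq> carrier G"
begin

abbreviation "V \<equiv> carrier G \<times> (UNIV :: bool set)"
abbreviation "E \<equiv> bicayley_adj G R S"
abbreviation "cross b \<equiv> bicayley_conn G R S b (\<not> b)"

lemma finite_R: "finite R" and finite_S: "finite S"
  using finite_carrier R_subset S_subset by (auto intro: finite_subset)

lemma inv_image_R: "m_inv G ` R = R"
  using R_inv R_subset by (force simp: image_iff subset_iff)

lemma conn_subset: "bicayley_conn G R S i j \<subseteq> carrier G"
  using R_subset S_subset by (auto simp: bicayley_conn_def)

lemma finite_conn: "finite (bicayley_conn G R S i j)"
  using finite_R finite_S by (simp add: bicayley_conn_def)

lemma conn_swap: "bicayley_conn G R S j i = m_inv G ` bicayley_conn G R S i j"
  using S_subset inv_image_R by (auto simp: bicayley_conn_def image_image subset_iff intro!: image_cong)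

lemma card_conn_cross: "card (cross b) = card S"
  using card_image[OF inj_on_subset[OF inv_inj S_subset]] by (simp add: bicayley_conn_def)

lemma bicayley_adj_Pair [simp]:
  "E (g, i) (h, j) \<longleftrightarrow> cayley_adj G (bicayley_conn G R S i j) g h"
  by (simp add: bicayley_adj_def)

lemma neighbours_bicayley:
  assumes "g \<in> carrier G"
  shows "neighbours V E (g, b) =
    (\<lambda>r. (r \<otimes> g, b)) ` R \<union> (\<lambda>t. (t \<otimes> g, \<not> b)) ` bicayley_conn G R S b (\<not> b)"
proof (rule Set.set_eqI)
  fix u :: "'a \<times> bool"
  obtain h j where u: "u = (h, j)" by fastforce
  have "u \<in> neighbours V E (g, b) \<longleftrightarrow> (\<exists>c\<in>bicayley_conn G R S b j. h = c \<otimes> g)"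
    using assms conn_subset by (auto simp: u neighbours_def cayley_adj_def)
  then show "u \<in> neighbours V E (g, b) \<longleftrightarrow>
      u \<in> (\<lambda>r. (r \<otimes> g, b)) ` R \<union> (\<lambda>t. (t \<otimes> g, \<not> b)) ` bicayley_conn G R S b (\<not> b)"
    by (cases "j = b") (auto simp: u bicayley_conn_def)
qed

lemma simple_graph_bicayley: "simple_graph V E"
proof -
  have "E v u" if "E u v" for u v
    using that conn_subset cayley_adj_inv_image[of "bicayley_conn G R S (snd u) (snd v)"]
    by (simp add: bicayley_adj_def conn_swap[of "snd v"])
  moreover have "\<not> E u u" for u
    using one_notin_R R_subset by (simp add: bicayley_adj_def bicayley_conn_def cayley_adj_iff)
  ultimately show ?thesis
    by (auto simp: simple_graph_def bicayley_adj_def cayley_adj_def)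
qed

lemma card_neighbours_bicayley:
  assumes "v \<in> V"
  shows "card (neighbours V E v) = card R + card S"
proof -
  obtain g b where v: "v = (g, b)" "g \<in> carrier G" using assms by auto
  have card_shift: "card ((\<lambda>c. (c \<otimes> g, j)) ` C) = card C" if "C \<subseteq> carrier G" for C j
    using that v(2) by (intro card_image) (auto simp: inj_on_def subset_iff)
  have "(\<lambda>r. (r \<otimes> g, b)) ` R \<inter> (\<lambda>t. (t \<otimes> g, \<not> b)) ` bicayley_conn G R S b (\<not> b) = {}"
    by auto
  then show ?thesis
    using finite_R finite_conn conn_subset R_subset card_conn_cross[of b]
    by (simp add: v neighbours_bicayley card_Un_disjoint card_shift)
qed

lemma regular_graph_bicayley: "regular_graph V E"
  using card_neighbours_bicayley unfolding regular_graph_def neighbours_def by blast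

lemma bicayley_block_sum:
  assumes "g \<in> carrier G" "A \<subseteq> carrier G" "B \<subseteq> carrier G"
  shows "(\<Sum>u\<in>(\<lambda>a. (a \<otimes> g, i)) ` A. \<Sum>w\<in>(\<lambda>b. (b \<otimes> g, j)) ` B. of_bool (E u w)) =
    cayley_edge_count G (bicayley_conn G R S i j) A B"
proof -
  have inj: "inj_on (\<lambda>c. (c \<otimes> g, k)) C" if "C \<subseteq> carrier G" for C k
    using that assms(1) by (auto simp: inj_on_def subset_iff)
  have "E (a \<otimes> g, i) (b \<otimes> g, j) \<longleftrightarrow> cayley_adj G (bicayley_conn G R S i j) a b"
    if "a \<in> A" "b \<in> B" for a b
    using that assms by (simp add: cayley_adj_mult_right[OF conn_subset] subsetD)
  then show ?thesis
    unfolding cayley_edge_count_def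
    by (simp add: sum.reindex[OF inj[OF assms(2)]] sum.reindex[OF inj[OF assms(3)]]
        del: sum_of_bool_eq cong: sum.cong)
qed

lemma cayley_edge_count_cross:
  "cayley_edge_count G (cross b) R (cross b) = cayley_edge_count G R (m_inv G ` cross b) (m_inv G ` cross b)"
proof -
  have fin: "finite (m_inv G ` cross b)" and sub: "m_inv G ` cross b \<subseteq> carrier G"
    using finite_conn[of b "\<not> b"] conn_subset[of b "\<not> b"] by auto
  have "cayley_edge_count G (cross b) R (cross b) = cayley_edge_count G (m_inv G ` cross b) (cross b) R"
    using cayley_edge_count_rotate[of R "cross b" "cross b"] finite_R finite_conn R_subset conn_subset
    by (simp add: inv_image_R)
  also have "\<dots> = cayley_edge_count G R (m_inv G ` cross b) (m_inv G ` cross b)"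
    using cayley_edge_count_rotate[of "cross b" R "m_inv G ` cross b"] finite_R finite_conn R_subset conn_subset
      fin sub by (simp add: inv_image_R)
  finally show ?thesis .
qed

lemma nbhd_edge_count_bicayley:
  assumes "g \<in> carrier G"
  shows "nbhd_edge_count V E (g, b) = cayley_edge_count G R R R
    + 2 * cayley_edge_count G R (m_inv G ` cross b) (m_inv G ` cross b) + cayley_edge_count G R (cross b) (cross b)"
proof -
  let ?P = "(\<lambda>r. (r \<otimes> g, b)) ` R" and ?Q = "(\<lambda>t. (t \<otimes> g, \<not> b)) ` cross b"
  let ?e = "\<lambda>U W. \<Sum>u\<in>U. \<Sum>w\<in>W. of_bool (E u w)"
  have "?P \<inter> ?Q = {}" and "finite ?P" and "finite ?Q"
    using finite_R finite_conn by auto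
  then have "nbhd_edge_count V E (g, b) = ?e ?P ?P + ?e ?P ?Q + ?e ?Q ?P + ?e ?Q ?Q"
    unfolding nbhd_edge_count_def neighbours_bicayley[OF assms]
    by (simp add: sum.union_disjoint sum.distrib del: sum_of_bool_eq)
  also have "\<dots> = cayley_edge_count G R R R + cayley_edge_count G (cross b) R (cross b)
      + cayley_edge_count G (m_inv G ` cross b) (cross b) R + cayley_edge_count G R (cross b) (cross b)"
  proof -
    have T: "cross b \<subseteq> carrier G" by (rule conn_subset)
    have "bicayley_conn G R S b b = R" "bicayley_conn G R S (\<not> b) (\<not> b) = R"
      by (simp_all add: bicayley_conn_def)
    moreover have "bicayley_conn G R S (\<not> b) b = m_inv G ` cross b"
      by (rule conn_swap)
    ultimately show ?thesis
      using bicayley_block_sum[OF assms R_subset R_subset, where i = b and j = b]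
        bicayley_block_sum[OF assms R_subset T, where i = b and j = "\<not> b"]
        bicayley_block_sum[OF assms T R_subset, where i = "\<not> b" and j = b]
        bicayley_block_sum[OF assms T T, where i = "\<not> b" and j = "\<not> b"]
      by simp
  qed
  also have "cayley_edge_count G (m_inv G ` cross b) (cross b) R = cayley_edge_count G (cross b) R (cross b)"
    using conn_subset by (rule cayley_edge_count_inv_image)
  finally show ?thesis
    by (simp add: cayley_edge_count_cross)
qed

lemma bicayley_shift_Pair [simp]: "g \<in> carrier G \<Longrightarrow> bicayley_shift G y (g, b) = (g \<otimes> y, b)"
  by (simp add: bicayley_shift_def)

lemma bicayley_shift_graph_aut:
  assumes "y \<in> carrier G"
  shows "bicayley_shift G y \<in> carrier (graph_aut_group V E)"
proof -
  have "bij_betw (bicayley_shift G y) V V"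
    by (rule bij_betw_byWitness[where f' = "bicayley_shift G (inv y)"])
      (use assms in \<open>auto simp: m_assoc\<close>)
  moreover have "E (bicayley_shift G y u) (bicayley_shift G y v) \<longleftrightarrow> E u v" if "u \<in> V" "v \<in> V" for u v
    using that assms by (auto simp: cayley_adj_mult_right[OF conn_subset])
  ultimately show ?thesis
    by (simp add: graph_aut_group_carrier graph_iso_def bicayley_shift_def)
qed

lemma nbhd_edge_count_bicayley_eq_iff:
  assumes "g \<in> carrier G" "h \<in> carrier G"
    and "cayley_edge_count G R S S \<noteq> cayley_edge_count G R (m_inv G ` S) (m_inv G ` S)"
  shows "nbhd_edge_count V E (g, b) = nbhd_edge_count V E (h, b') \<longleftrightarrow> b = b'"
proof -
  have "m_inv G ` m_inv G ` S = S"
    using S_subset by (force simp: image_image subset_iff)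
  then show ?thesis
    using assms by (simp add: nbhd_edge_count_bicayley bicayley_conn_def)
qed

end

locale rigid_bicayley = bicayley +
  assumes cayley_aut: "carrier (graph_aut_group (carrier G) (cayley_adj G R)) = right_translation G ` carrier G"
    and count_ne: "cayley_edge_count G R S S \<noteq> cayley_edge_count G R (m_inv G ` S) (m_inv G ` S)"
    and S_stabilizer: "\<And>w. w \<in> carrier G \<Longrightarrow> (\<forall>s\<in>S. s \<otimes> w \<in> S) \<Longrightarrow> w = \<one>"
begin

lemma graph_aut_preserves_side:
  assumes "\<phi> \<in> carrier (graph_aut_group V E)" and "v \<in> V"
  shows "\<phi> v \<in> V \<and> snd (\<phi> v) = snd v"
proof -
  obtain g b where v: "v = (g, b)" "g \<in> carrier G" using assms(2) by auto
  obtain h b' where \<phi>v: "\<phi> v = (h, b')" "h \<in> carrier G"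
    using graph_aut_apply_mem[OF assms] by fastforce
  have "nbhd_edge_count V E (\<phi> v) = nbhd_edge_count V E v"
    using assms by (simp add: graph_aut_group_carrier nbhd_edge_count_graph_iso)
  then show ?thesis
    using v \<phi>v nbhd_edge_count_bicayley_eq_iff[OF _ _ count_ne] by simp
qed

lemma graph_aut_restrict_side:
  assumes \<phi>: "\<phi> \<in> carrier (graph_aut_group V E)"
  shows "(\<lambda>g\<in>carrier G. fst (\<phi> (g, b))) \<in> carrier (graph_aut_group (carrier G) (cayley_adj G R))"
proof -
  define \<alpha> where "\<alpha> = (\<lambda>g\<in>carrier G. fst (\<phi> (g, b)))"
  have \<phi>_side: "\<phi> (g, b) = (\<alpha> g, b)" "\<alpha> g \<in> carrier G" if "g \<in> carrier G" for g
    using graph_aut_preserves_side[OF \<phi>, of "(g, b)"] that by (auto simp: \<alpha>_def prod_eq_iff)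
  have iso: "graph_iso V E V E \<phi>"
    using \<phi> by (simp add: graph_aut_group_carrier)
  have "inj_on \<alpha> (carrier G)"
  proof (rule inj_onI)
    fix g h assume "g \<in> carrier G" "h \<in> carrier G" "\<alpha> g = \<alpha> h"
    then have "\<phi> (g, b) = \<phi> (h, b)" by (simp add: \<phi>_side)
    then show "g = h"
      using iso \<open>g \<in> carrier G\<close> \<open>h \<in> carrier G\<close>
      by (auto simp: graph_iso_def bij_betw_def inj_on_def)
  qed
  moreover have "\<alpha> ` carrier G \<subseteq> carrier G"
    using \<phi>_side by auto
  ultimately have "bij_betw \<alpha> (carrier G) (carrier G)"
    using endo_inj_surj[OF finite_carrier] by (simp add: bij_betw_def)
  moreover have "cayley_adj G R g h \<longleftrightarrow> cayley_adj G R (\<alpha> g) (\<alpha> h)"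
    if "g \<in> carrier G" "h \<in> carrier G" for g h
  proof -
    have "cayley_adj G R g h \<longleftrightarrow> E (g, b) (h, b)"
      by (simp add: bicayley_conn_def)
    also have "\<dots> \<longleftrightarrow> E (\<phi> (g, b)) (\<phi> (h, b))"
      using iso that by (simp add: graph_iso_def)
    also have "\<dots> \<longleftrightarrow> cayley_adj G R (\<alpha> g) (\<alpha> h)"
      using that by (simp add: \<phi>_side bicayley_conn_def)
    finally show ?thesis .
  qed
  ultimately show ?thesis
    by (simp add: graph_aut_group_carrier graph_iso_def \<alpha>_def)
qed

lemma graph_aut_on_side:
  assumes "\<phi> \<in> carrier (graph_aut_group V E)"
  obtains y where "y \<in> carrier G" "\<And>g. g \<in> carrier G \<Longrightarrow> \<phi> (g, b) = (g \<otimes> y, b)"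
proof -
  obtain y where y: "y \<in> carrier G" "(\<lambda>g\<in>carrier G. fst (\<phi> (g, b))) = right_translation G y"
    using graph_aut_restrict_side[OF assms, of b] cayley_aut by auto
  have "\<phi> (g, b) = (g \<otimes> y, b)" if "g \<in> carrier G" for g
    using fun_cong[OF y(2), of g] graph_aut_preserves_side[OF assms, of "(g, b)"] that
    by (simp add: right_translation_def prod_eq_iff)
  with y(1) show ?thesis using that by blast
qed

lemma graph_aut_same_translation:
  assumes \<phi>: "\<phi> \<in> carrier (graph_aut_group V E)" and "y \<in> carrier G" "z \<in> carrier G"
    and \<phi>_False: "\<And>g. g \<in> carrier G \<Longrightarrow> \<phi> (g, False) = (g \<otimes> y, False)"
    and \<phi>_True: "\<And>g. g \<in> carrier G \<Longrightarrow> \<phi> (g, True) = (g \<otimes> z, True)"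
  shows "z = y"
proof -
  have "s \<otimes> (z \<otimes> inv y) \<in> S" if "s \<in> S" for s
  proof -
    have s: "s \<in> carrier G" using that S_subset by auto
    have "E (\<one>, False) (s, True)"
      using that s S_subset by (simp add: bicayley_conn_def cayley_adj_iff)
    then have "E (\<phi> (\<one>, False)) (\<phi> (s, True))"
      using \<phi> s by (simp add: graph_aut_group_carrier graph_iso_def)
    then have "s \<otimes> z \<otimes> inv y \<in> S"
      using assms s S_subset by (simp add: bicayley_conn_def cayley_adj_iff)
    then show ?thesis
      using s assms(2,3) by (simp add: m_assoc)
  qed
  then have "z \<otimes> inv y = \<one>"
    using S_stabilizer assms(2,3) by simp
  then show "z = y"
    using assms(2,3) by (metis inv_closed inv_equality inv_inv r_inv)
qed

lemma graph_aut_bicayley_eq: "carrier (graph_aut_group V E) = bicayley_shift G ` carrier G"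
proof
  show "bicayley_shift G ` carrier G \<subseteq> carrier (graph_aut_group V E)"
    using bicayley_shift_graph_aut by blast
  show "carrier (graph_aut_group V E) \<subseteq> bicayley_shift G ` carrier G"
  proof
    fix \<phi> assume \<phi>: "\<phi> \<in> carrier (graph_aut_group V E)"
    obtain y where y: "y \<in> carrier G" "\<And>g. g \<in> carrier G \<Longrightarrow> \<phi> (g, False) = (g \<otimes> y, False)"
      using graph_aut_on_side[OF \<phi>] by metis
    obtain z where z: "z \<in> carrier G" "\<And>g. g \<in> carrier G \<Longrightarrow> \<phi> (g, True) = (g \<otimes> z, True)"
      using graph_aut_on_side[OF \<phi>] by metis
    have "z = y"
      using graph_aut_same_translation[OF \<phi> y(1) z(1)] y(2) z(2) by blast
    have "\<phi> = bicayley_shift G y"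
    proof (rule extensionalityI)
      show "\<phi> \<in> extensional V" using \<phi> by (simp add: graph_aut_group_carrier)
      fix v assume "v \<in> V"
      then obtain g b where "v = (g, b)" "g \<in> carrier G" by auto
      then show "\<phi> v = bicayley_shift G y v"
        using y z \<open>z = y\<close> by (cases b) simp_all
    qed (simp add: bicayley_shift_def)
    then show "\<phi> \<in> bicayley_shift G ` carrier G"
      using y(1) by blast
  qed
qed

lemma graph_aut_bicayley_iso: "graph_aut_group V E \<cong> G"
proof -
  let ?A = "graph_aut_group V E" and ?f = "\<lambda>y. bicayley_shift G (inv y)"
  have "?f \<in> hom G ?A"
  proof (rule homI)
    fix a b assume a: "a \<in> carrier G" and b: "b \<in> carrier G"
    have "?f (a \<otimes> b) = compose V (?f a) (?f b)"
    proof (rule extensionalityI)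
      fix v assume "v \<in> V"
      then obtain g i where "v = (g, i)" "g \<in> carrier G" by auto
      then show "?f (a \<otimes> b) v = compose V (?f a) (?f b) v"
        using a b by (simp add: compose_def inv_mult_group m_assoc)
    qed (simp_all add: bicayley_shift_def compose_def)
    then show "?f (a \<otimes> b) = ?f a \<otimes>\<^bsub>?A\<^esub> ?f b"
      using a b by (simp add: graph_aut_group_mult bicayley_shift_graph_aut)
  qed (simp add: bicayley_shift_graph_aut)
  moreover have "inj_on ?f (carrier G)"
  proof (rule inj_onI)
    fix a b assume "a \<in> carrier G" "b \<in> carrier G" "?f a = ?f b"
    then have "?f a (\<one>, False) = ?f b (\<one>, False)" by simp
    then show "a = b"
      using \<open>a \<in> carrier G\<close> \<open>b \<in> carrier G\<close> inv_inj by (simp add: inj_on_eq_iff)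
  qed
  moreover have "?f ` carrier G = carrier ?A"
  proof
    show "?f ` carrier G \<subseteq> carrier ?A"
      using bicayley_shift_graph_aut by auto
    show "carrier ?A \<subseteq> ?f ` carrier G"
    proof
      fix h assume "h \<in> carrier ?A"
      then obtain y where "y \<in> carrier G" "h = ?f (inv y)"
        using graph_aut_bicayley_eq by auto
      then show "h \<in> ?f ` carrier G"
        by (intro image_eqI[where x = "inv y"]) simp_all
    qed
  qed
  ultimately have "G \<cong> ?A"
    by (auto simp: is_iso_def iso_def bij_betw_def)
  then show ?thesis
    by (rule iso_sym)
qed

lemma aut_semiregular_bicayley: "aut_semiregular V E"
  unfolding aut_semiregular_def graph_aut_bicayley_eq
proof (intro ballI impI)
  fix h v assume "h \<in> bicayley_shift G ` carrier G" "v \<in> V" "h v = v"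
  then obtain y g b where y: "y \<in> carrier G" "h = bicayley_shift G y" and v: "v = (g, b)" "g \<in> carrier G"
    by auto
  then have "g \<otimes> y = g"
    using \<open>h v = v\<close> by simp
  then have "y = \<one>"
    using y(1) v(2) by (metis l_cancel_one')
  moreover have "bicayley_shift G \<one> = (\<lambda>v\<in>V. v)"
    by (rule extensionalityI[where A = V]) (auto simp: bicayley_shift_def)
  ultimately show "h = \<one>\<^bsub>graph_aut_group V E\<^esub>"
    using y(2) by (simp add: graph_aut_group_one)
qed

lemma card_aut_orbits_bicayley: "card (aut_orbits V E) = 2"
proof -
  have orbit: "(\<lambda>h. h v) ` carrier (graph_aut_group V E) = carrier G \<times> {snd v}" if "v \<in> V" for v
  proof -
    obtain g b where v: "v = (g, b)" "g \<in> carrier G" using \<open>v \<in> V\<close> by auto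
    have "(\<lambda>h. h v) ` carrier (graph_aut_group V E) = (\<lambda>y. (g \<otimes> y, b)) ` carrier G"
      using v by (simp add: graph_aut_bicayley_eq image_image)
    also have "\<dots> = carrier G \<times> {b}"
    proof -
      have "h = g \<otimes> (inv g \<otimes> h)" if "h \<in> carrier G" for h
        using that v(2) by (simp add: m_assoc[symmetric])
      then show ?thesis
        using v(2) by (auto intro!: image_eqI)
    qed
    finally show ?thesis using v by simp
  qed
  have "aut_orbits V E = (\<lambda>v. carrier G \<times> {snd v}) ` V"
    using orbit by (simp add: aut_orbits_def cong: image_cong)
  also have "\<dots> = {carrier G \<times> {False}, carrier G \<times> {True}}"
  proof
    have "carrier G \<times> {b} \<in> (\<lambda>v. carrier G \<times> {snd v}) ` V" for b
      by (rule image_eqI[where x = "(\<one>, b)"]) auto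
    then show "{carrier G \<times> {False}, carrier G \<times> {True}} \<subseteq> (\<lambda>v. carrier G \<times> {snd v}) ` V"
      by simp
  qed auto
  moreover have "carrier G \<times> {False} \<noteq> carrier G \<times> {True}"
    by blast
  ultimately show ?thesis
    by simp
qed

lemma has_2_GRR: "has_m_GRR G 2"
  using finite_carrier simple_graph_bicayley regular_graph_bicayley aut_semiregular_bicayley
    card_aut_orbits_bicayley graph_aut_bicayley_iso
  by (intro has_m_GRR_if_graph) simp_all

end

section \<open>The connection set \<open>{1, c, c x}\<close>\<close>

context group
begin

text \<open>Right multiplication by \<open>a\<close> moves every element of \<open>{1, a, b}\<close>, so it is the cycle
  \<open>1 \<mapsto> a \<mapsto> b \<mapsto> 1\<close>; thus \<open>b = a a\<close> commutes with \<open>a\<close>.\<close>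

lemma commute_if_three_set_stable:
  assumes "a \<in> carrier G" "b \<in> carrier G" "a \<noteq> \<one>" "b \<noteq> \<one>" "a \<noteq> b"
    and "a \<otimes> a \<in> {\<one>, a, b}" "b \<otimes> a \<in> {\<one>, a, b}"
  shows "a \<otimes> b = b \<otimes> a"
proof -
  have "b \<otimes> a \<noteq> \<one> \<otimes> a" "b \<otimes> a \<noteq> b \<otimes> \<one>"
    using assms(1-4) by simp_all
  then have ba: "b \<otimes> a = \<one>"
    using assms(1,2,7) by auto
  have "a \<otimes> a \<noteq> b \<otimes> a" "a \<otimes> a \<noteq> a \<otimes> \<one>"
    using assms(1-3,5) by simp_all
  then have "a \<otimes> a = b"
    using assms(1,6) ba by auto
  then show ?thesis
    using assms(1) m_assoc[of a a a] by simp
qed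

lemma not_commute_if_conj_ne:
  assumes "c \<in> carrier G" "x \<in> carrier G" and "c \<otimes> x \<otimes> inv c \<noteq> x"
  shows "c \<otimes> x \<noteq> x \<otimes> c"
proof
  assume "c \<otimes> x = x \<otimes> c"
  then have "c \<otimes> x \<otimes> inv c = x \<otimes> c \<otimes> inv c" by simp
  also have "\<dots> = x" using assms(1,2) by (simp add: m_assoc)
  finally show False using assms(3) by contradiction
qed

lemma three_set_distinct:
  assumes "c \<in> carrier G" "x \<in> carrier G" and "c \<otimes> x \<noteq> x \<otimes> c"
  shows "c \<noteq> \<one>" "c \<otimes> x \<noteq> \<one>" "c \<noteq> c \<otimes> x"
proof -
  show "c \<noteq> \<one>"
    using assms by auto
  show "c \<otimes> x \<noteq> \<one>"
    using assms inv_comm by metis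
  show "c \<noteq> c \<otimes> x"
  proof
    assume "c = c \<otimes> x"
    then have "c \<otimes> \<one> = c \<otimes> x" using assms(1) by simp
    then show False using assms by simp
  qed
qed

lemma right_stable_three_set:
  assumes "c \<in> carrier G" "x \<in> carrier G" "w \<in> carrier G" and "c \<otimes> x \<noteq> x \<otimes> c"
    and stable: "\<forall>s\<in>{\<one>, c, c \<otimes> x}. s \<otimes> w \<in> {\<one>, c, c \<otimes> x}"
  shows "w = \<one>"
proof (rule ccontr)
  assume "w \<noteq> \<one>"
  have distinct: "c \<noteq> \<one>" "c \<otimes> x \<noteq> \<one>" "c \<noteq> c \<otimes> x"
    using three_set_distinct assms(1,2,4) by auto
  have "c \<otimes> (c \<otimes> x) \<noteq> c \<otimes> x \<otimes> c"
    using assms(1,2,4) by (simp add: m_assoc)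
  moreover have "w = c \<or> w = c \<otimes> x"
    using stable assms(3) \<open>w \<noteq> \<one>\<close> by auto
  then have "c \<otimes> (c \<otimes> x) = c \<otimes> x \<otimes> c"
  proof
    assume "w = c"
    then show ?thesis
      using commute_if_three_set_stable[of c "c \<otimes> x"] stable assms(1,2) distinct by simp
  next
    assume "w = c \<otimes> x"
    then show ?thesis
      using commute_if_three_set_stable[of "c \<otimes> x" c] stable assms(1,2) distinct
      by (simp add: insert_commute)
  qed
  ultimately show False ..
qed

text \<open>The two counts differ only at the pairs \<open>(c, c x)\<close> and \<open>(c x, c)\<close>: they contribute
  \<open>x\<^sup>\<plusminus>\<^sup>1 \<in> R\<close> to the count on \<open>S\<inverse>\<close> and \<open>(c x c\<inverse>)\<^sup>\<plusminus>\<^sup>1 \<notin> R\<close> to the count on \<open>S\<close>.\<close>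

lemma cayley_edge_count_three_set:
  assumes R: "R \<subseteq> carrier G" "\<And>r. r \<in> R \<Longrightarrow> inv r \<in> R" "\<one> \<notin> R"
    and c: "c \<in> carrier G" and x: "x \<in> R" and conj: "c \<otimes> x \<otimes> inv c \<notin> R"
  shows "cayley_edge_count G R (m_inv G ` {\<one>, c, c \<otimes> x}) (m_inv G ` {\<one>, c, c \<otimes> x}) =
    cayley_edge_count G R {\<one>, c, c \<otimes> x} {\<one>, c, c \<otimes> x} + 2"
proof -
  let ?S = "{\<one>, c, c \<otimes> x}"
  have xc: "x \<in> carrier G" using x R(1) by auto
  have S: "?S \<subseteq> carrier G" using c xc by auto
  have inv_mem: "inv a \<in> R \<longleftrightarrow> a \<in> R" if "a \<in> carrier G" for a
    using R(2) that inv_inv by metis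
  have "c \<otimes> x \<noteq> x \<otimes> c"
    using not_commute_if_conj_ne c xc conj x by metis
  then have distinct: "c \<noteq> \<one>" "c \<otimes> x \<noteq> \<one>" "c \<noteq> c \<otimes> x"
    using three_set_distinct c xc by auto
  have products: "c \<otimes> inv (c \<otimes> x) = inv (c \<otimes> x \<otimes> inv c)" "inv (c \<otimes> x) \<otimes> c = inv x"
    using c xc by (simp_all add: inv_mult_group m_assoc)
  have "inv c \<otimes> (c \<otimes> x) = x"
    using c xc by (simp add: m_assoc[symmetric])
  have "cayley_edge_count G R (m_inv G ` ?S) (m_inv G ` ?S) =
      (\<Sum>s\<in>?S. \<Sum>s'\<in>?S. of_bool (cayley_adj G R (inv s) (inv s')))"
    by (simp only: cayley_edge_count_def sum.reindex[OF inj_on_subset[OF inv_inj S]] comp_def)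
  also have "\<dots> = (\<Sum>s\<in>?S. \<Sum>s'\<in>?S. of_bool (inv s' \<otimes> s \<in> R))"
    using S R(1) by (intro sum.cong refl) (auto simp: cayley_adj_iff)
  finally have count_inv: "cayley_edge_count G R (m_inv G ` ?S) (m_inv G ` ?S) =
      (\<Sum>s\<in>?S. \<Sum>s'\<in>?S. of_bool (inv s' \<otimes> s \<in> R))" .
  have count: "cayley_edge_count G R ?S ?S = (\<Sum>s\<in>?S. \<Sum>s'\<in>?S. of_bool (s' \<otimes> inv s \<in> R))"
    using S R(1) unfolding cayley_edge_count_def by (intro sum.cong refl) (auto simp: cayley_adj_iff)
  show ?thesis
    unfolding count_inv count
    using c xc x conj R(3) distinct products \<open>inv c \<otimes> (c \<otimes> x) = x\<close>
      inv_mem[of c] inv_mem[of "c \<otimes> x"] inv_mem[of x] inv_mem[of "c \<otimes> x \<otimes> inv c"]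
    by (simp add: eq_commute[of \<one>] del: sum_of_bool_eq)
qed

end

theorem lemma3p8:
  fixes G :: "('a, 'b) monoid_scheme"
  assumes "group G" and "finite (carrier G)" and "\<not> comm_group G"
    and "has_GRR G"
  shows "has_m_GRR G 2"
proof -
  interpret group G by fact
  obtain R where R: "R \<subseteq> carrier G" "\<And>r. r \<in> R \<Longrightarrow> inv\<^bsub>G\<^esub> r \<in> R" "\<one>\<^bsub>G\<^esub> \<notin> R"
    and aut: "graph_aut_group (carrier G) (cayley_adj G R) \<cong> G"
    using \<open>has_GRR G\<close> unfolding has_GRR_def by blast
  have right_translations:
    "carrier (graph_aut_group (carrier G) (cayley_adj G R)) = right_translation G ` carrier G"
    using graph_aut_cayley_eq_right_translations[OF assms(2) R(1) aut] .
  obtain c x where c: "c \<in> carrier G" and x: "x \<in> R"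
    and conj: "c \<otimes>\<^bsub>G\<^esub> x \<otimes>\<^bsub>G\<^esub> inv\<^bsub>G\<^esub> c \<notin> R"
    using ex_conjugate_notin_if_not_comm[OF R(1) assms(3) right_translations] by blast
  have "x \<in> carrier G" using x R(1) by auto
  then have "c \<otimes>\<^bsub>G\<^esub> x \<noteq> x \<otimes>\<^bsub>G\<^esub> c"
    using not_commute_if_conj_ne c conj x by metis
  then interpret rigid_bicayley G R "{\<one>\<^bsub>G\<^esub>, c, c \<otimes>\<^bsub>G\<^esub> x}"
    using assms(2) R right_translations c \<open>x \<in> carrier G\<close>
      cayley_edge_count_three_set[OF R c x conj] right_stable_three_set[OF c \<open>x \<in> carrier G\<close>]
    by unfold_locales (simp_all del: image_insert insert_iff)
  show ?thesis
    by (rule has_2_GRR)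
qed

end
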